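(* Let $v\ge2$ and $M,N\in{\cal I}_v$ with $N=N_1+N_2$, where $N_1=\beta M$ for some $\beta\in\mathbb R$ and $M\perp N_2$ with respect to $(x,y):=\mathrm{Re}(xy^* )$. Then $$\{e^M,e^N\}=2(\cos|M|)\,e^N+2\,\frac{\sin|M|}{|M|}\,M\Big(\cos|N|+\frac{\sin|N|}{|N|}N_1\Big).$$
   Context: ${\cal A}_v$ is the real Cayley-Dickson algebra of dimension $2^v$, $z^*$ its conjugation, $\mathrm{Re}(z)=(z+z^* )/2$, $|z|=(zz^* )^{1/2}$, ${\cal I}_v=\{z:\mathrm{Re}(z)=0\}$. For $M\in{\cal I}_v$, $e^M=\cos|M|+\frac{\sin|M|}{|M|}M$ (with $\frac{\sin|M|}{|M|}:=1$ when $M=0$). $\{a,b\}:=ab+ba$ is the anticommutator. *)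

theory Defs
  imports Complex_Main
begin

text \<open>Real Cayley-Dickson algebra A_v of dimension 2^v. The doubling is
  A_(v+1) = A_v x A_v with (a,b)(c,d) = (ac - d* b, da + b c*), (a,b)* = (a*, -b).
  Index i < 2^v is the first component, 2^v <= i < 2^(v+1) the second.\<close>

type_synonym cd = "nat \<Rightarrow> real"

definition cd_carrier :: "nat \<Rightarrow> cd set" where
  "cd_carrier v = {x. \<forall>i\<ge>2^v. x i = 0}"

definition cd_lo :: "nat \<Rightarrow> cd \<Rightarrow> cd" where
  "cd_lo h x = (\<lambda>i. if i < h then x i else 0)"

definition cd_hi :: "nat \<Rightarrow> cd \<Rightarrow> cd" where
  "cd_hi h x = (\<lambda>i. if i < h then x (i + h) else 0)"

definition cd_pair :: "nat \<Rightarrow> cd \<Rightarrow> cd \<Rightarrow> cd" where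
  "cd_pair h p q = (\<lambda>i. if i < h then p i else if i < 2 * h then q (i - h) else 0)"

definition cd_real :: "real \<Rightarrow> cd" where
  "cd_real r = (\<lambda>i. if i = 0 then r else 0)"

definition cd_add :: "cd \<Rightarrow> cd \<Rightarrow> cd" where
  "cd_add x y = (\<lambda>i. x i + y i)"

definition cd_sub :: "cd \<Rightarrow> cd \<Rightarrow> cd" where
  "cd_sub x y = (\<lambda>i. x i - y i)"

definition cd_neg :: "cd \<Rightarrow> cd" where
  "cd_neg x = (\<lambda>i. - x i)"

definition cd_zero :: cd where
  "cd_zero = (\<lambda>i. 0)"

definition cd_scale :: "real \<Rightarrow> cd \<Rightarrow> cd" where
  "cd_scale c x = (\<lambda>i. c * x i)"

primrec cd_conj :: "nat \<Rightarrow> cd \<Rightarrow> cd" where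
  "cd_conj 0 x = cd_real (x 0)"
| "cd_conj (Suc v) x =
     cd_pair (2^v) (cd_conj v (cd_lo (2^v) x)) (cd_neg (cd_hi (2^v) x))"

primrec cd_mult :: "nat \<Rightarrow> cd \<Rightarrow> cd \<Rightarrow> cd" where
  "cd_mult 0 x y = cd_real (x 0 * y 0)"
| "cd_mult (Suc v) x y =
     (let h = 2^v; a = cd_lo h x; b = cd_hi h x; c = cd_lo h y; d = cd_hi h y
      in cd_pair h (cd_sub (cd_mult v a c) (cd_mult v (cd_conj v d) b))
                   (cd_add (cd_mult v d a) (cd_mult v b (cd_conj v c))))"

definition cd_Re :: "nat \<Rightarrow> cd \<Rightarrow> cd" where
  "cd_Re v z = cd_scale (1/2) (cd_add z (cd_conj v z))"

text \<open>|z| = (z z*)^(1/2); z z* is real, i.e. its 0-th coordinate.\<close>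
definition cd_norm :: "nat \<Rightarrow> cd \<Rightarrow> real" where
  "cd_norm v z = sqrt (cd_mult v z (cd_conj v z) 0)"

definition cd_Im :: "nat \<Rightarrow> cd set" where
  "cd_Im v = {z \<in> cd_carrier v. cd_Re v z = cd_zero}"

definition cd_inner :: "nat \<Rightarrow> cd \<Rightarrow> cd \<Rightarrow> cd" where
  "cd_inner v x y = cd_Re v (cd_mult v x (cd_conj v y))"

definition sinc_div :: "real \<Rightarrow> real" where
  "sinc_div t = (if t = 0 then 1 else sin t / t)"

definition cd_exp :: "nat \<Rightarrow> cd \<Rightarrow> cd" where
  "cd_exp v M = cd_add (cd_real (cos (cd_norm v M))) (cd_scale (sinc_div (cd_norm v M)) M)"

definition cd_anticomm :: "nat \<Rightarrow> cd \<Rightarrow> cd \<Rightarrow> cd" where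
  "cd_anticomm v a b = cd_add (cd_mult v a b) (cd_mult v b a)"

end

theory Submission
  imports Defs
begin

text \<open>Write \<open>e\<^sup>M = c\<^sub>M + s\<^sub>M M\<close> with real \<open>c\<^sub>M = cos |M|\<close>, \<open>s\<^sub>M = sin |M| / |M|\<close>. Reals are
  central and the multiplication of \<open>A\<^sub>v\<close> is bilinear, so \<open>{e\<^sup>M, e\<^sup>N}\<close> expands to
  \<open>2 c\<^sub>M e\<^sup>N + 2 s\<^sub>M c\<^sub>N M + s\<^sub>M s\<^sub>N {M, N}\<close>. For imaginary \<open>x, y\<close> we have \<open>y\<^sup>* = -y\<close>, hence
  \<open>(x, y) = (x y\<^sup>* + y x\<^sup>*)/2 = -{x, y}/2\<close>; so \<open>M \<bottom> N\<^sub>2\<close> gives \<open>{M, N\<^sub>2} = 0\<close> and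
  \<open>{M, N} = 2 \<beta> M\<^sup>2\<close>.\<close>

lemma cd_sub_eq_add_scale: "cd_sub x y = cd_add x (cd_scale (-1) y)"
  by (simp add: cd_sub_def cd_add_def cd_scale_def fun_eq_iff)

lemma cd_neg_eq_scale: "cd_neg x = cd_scale (-1) x"
  by (simp add: cd_neg_def cd_scale_def fun_eq_iff)

lemma cd_lo_add: "cd_lo h (cd_add x y) = cd_add (cd_lo h x) (cd_lo h y)"
  by (simp add: cd_lo_def cd_add_def fun_eq_iff)

lemma cd_hi_add: "cd_hi h (cd_add x y) = cd_add (cd_hi h x) (cd_hi h y)"
  by (simp add: cd_hi_def cd_add_def fun_eq_iff)

lemma cd_lo_scale: "cd_lo h (cd_scale c x) = cd_scale c (cd_lo h x)"
  by (simp add: cd_lo_def cd_scale_def fun_eq_iff)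

lemma cd_hi_scale: "cd_hi h (cd_scale c x) = cd_scale c (cd_hi h x)"
  by (simp add: cd_hi_def cd_scale_def fun_eq_iff)

lemmas cd_linear_simps =
  cd_sub_eq_add_scale cd_neg_eq_scale cd_lo_add cd_hi_add cd_lo_scale cd_hi_scale

lemma cd_conj_add: "cd_conj v (cd_add x y) = cd_add (cd_conj v x) (cd_conj v y)"
  by (induction v arbitrary: x y)
     (simp_all add: cd_linear_simps,
      auto simp: fun_eq_iff cd_pair_def cd_add_def cd_scale_def cd_real_def)

lemma cd_conj_scale: "cd_conj v (cd_scale c x) = cd_scale c (cd_conj v x)"
  by (induction v arbitrary: x)
     (simp_all add: cd_linear_simps,
      auto simp: fun_eq_iff cd_pair_def cd_add_def cd_scale_def cd_real_def)

text \<open>Both arguments must be treated in one induction: the doubling formula feeds the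
  halves of the left factor into the right argument of the recursive products.\<close>

lemma cd_mult_add:
  "cd_mult v (cd_add x y) z = cd_add (cd_mult v x z) (cd_mult v y z) \<and>
   cd_mult v z (cd_add x y) = cd_add (cd_mult v z x) (cd_mult v z y)"
  by (induction v arbitrary: x y z)
     (simp_all add: cd_linear_simps cd_conj_add cd_conj_scale Let_def,
      auto simp: fun_eq_iff cd_pair_def cd_add_def cd_scale_def cd_real_def algebra_simps)

lemma cd_mult_scale:
  "cd_mult v (cd_scale c x) z = cd_scale c (cd_mult v x z) \<and>
   cd_mult v z (cd_scale c x) = cd_scale c (cd_mult v z x)"
  by (induction v arbitrary: x z)
     (simp_all add: cd_linear_simps cd_conj_add cd_conj_scale Let_def,
      auto simp: fun_eq_iff cd_pair_def cd_add_def cd_scale_def cd_real_def algebra_simps)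

lemmas cd_mult_add_left = cd_mult_add[THEN conjunct1]
lemmas cd_mult_add_right = cd_mult_add[THEN conjunct2]
lemmas cd_mult_scale_left = cd_mult_scale[THEN conjunct1]
lemmas cd_mult_scale_right = cd_mult_scale[THEN conjunct2]

lemmas cd_mult_bilinear =
  cd_mult_add_left cd_mult_add_right cd_mult_scale_left cd_mult_scale_right

lemma cd_carrier_add [simp]:
  "x \<in> cd_carrier v \<Longrightarrow> y \<in> cd_carrier v \<Longrightarrow> cd_add x y \<in> cd_carrier v"
  by (simp add: cd_carrier_def cd_add_def)

lemma cd_carrier_scale [simp]: "x \<in> cd_carrier v \<Longrightarrow> cd_scale c x \<in> cd_carrier v"
  by (simp add: cd_carrier_def cd_scale_def)

lemma cd_carrier_neg [simp]: "x \<in> cd_carrier v \<Longrightarrow> cd_neg x \<in> cd_carrier v"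
  by (simp add: cd_carrier_def cd_neg_def)

lemma cd_carrier_real [simp]: "cd_real r \<in> cd_carrier v"
  by (simp add: cd_carrier_def cd_real_def)

lemma cd_carrier_lo [simp]: "cd_lo (2^v) x \<in> cd_carrier v"
  by (simp add: cd_carrier_def cd_lo_def)

lemma cd_carrier_hi [simp]: "cd_hi (2^v) x \<in> cd_carrier v"
  by (simp add: cd_carrier_def cd_hi_def)

lemma cd_carrier_conj [simp]: "cd_conj v x \<in> cd_carrier v"
  by (cases v) (simp_all add: cd_carrier_def cd_real_def cd_pair_def)

lemma cd_carrier_mult [simp]: "cd_mult v x y \<in> cd_carrier v"
  by (cases v) (simp_all add: cd_carrier_def cd_real_def cd_pair_def Let_def)

lemma cd_lo_pair [simp]: "p \<in> cd_carrier v \<Longrightarrow> cd_lo (2^v) (cd_pair (2^v) p q) = p"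
  by (auto simp: cd_carrier_def cd_lo_def cd_pair_def fun_eq_iff)

lemma cd_hi_pair [simp]: "q \<in> cd_carrier v \<Longrightarrow> cd_hi (2^v) (cd_pair (2^v) p q) = q"
  by (auto simp: cd_carrier_def cd_hi_def cd_pair_def fun_eq_iff)

lemma cd_pair_lo_hi:
  "x \<in> cd_carrier (Suc v) \<Longrightarrow> cd_pair (2^v) (cd_lo (2^v) x) (cd_hi (2^v) x) = x"
  by (auto simp: cd_carrier_def cd_hi_def cd_lo_def cd_pair_def fun_eq_iff)

lemma cd_conj_conj: "x \<in> cd_carrier v \<Longrightarrow> cd_conj v (cd_conj v x) = x"
proof (induction v arbitrary: x)
  case 0
  then show ?case by (auto simp: cd_carrier_def cd_real_def fun_eq_iff)
next
  case (Suc v)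
  have "cd_neg (cd_neg (cd_hi (2^v) x)) = cd_hi (2^v) x"
    by (simp add: cd_neg_def)
  then show ?case using Suc by (simp add: cd_pair_lo_hi)
qed

lemma cd_conj_mult: "cd_conj v (cd_mult v x y) = cd_mult v (cd_conj v y) (cd_conj v x)"
proof (induction v arbitrary: x y)
  case 0
  then show ?case by (simp add: cd_real_def mult.commute)
next
  case (Suc v)
  show ?case
    by (simp add: Let_def Suc.IH cd_conj_conj cd_linear_simps cd_conj_add cd_conj_scale
        cd_mult_bilinear)
       (auto simp: fun_eq_iff cd_pair_def cd_add_def cd_scale_def)
qed

lemma cd_scale_zero: "cd_scale 0 x = cd_zero"
  by (simp add: cd_scale_def cd_zero_def)

lemma cd_mult_zero: "cd_mult v cd_zero y = cd_zero" "cd_mult v y cd_zero = cd_zero"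
  using cd_mult_scale_left[of v 0 cd_zero y] cd_mult_scale_right[of v y 0 cd_zero]
  by (simp_all add: cd_scale_zero)

lemma cd_conj_zero: "cd_conj v cd_zero = cd_zero"
  using cd_conj_scale[of v 0 cd_zero] by (simp add: cd_scale_zero)

lemma cd_lo_real: "cd_lo (2^v) (cd_real r) = cd_real r"
  by (auto simp: cd_lo_def cd_real_def fun_eq_iff)

lemma cd_hi_real: "cd_hi (2^v) (cd_real r) = cd_zero"
  by (auto simp: cd_hi_def cd_real_def cd_zero_def fun_eq_iff)

lemma cd_conj_real: "cd_conj v (cd_real r) = cd_real r"
proof (induction v)
  case 0
  then show ?case by (simp add: cd_real_def)
next
  case (Suc v)
  then show ?case
    by (simp add: cd_lo_real cd_hi_real cd_neg_eq_scale cd_scale_zero[symmetric])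
       (auto simp: cd_pair_def cd_real_def cd_scale_def cd_zero_def fun_eq_iff)
qed

lemma cd_mult_real:
  "x \<in> cd_carrier v \<Longrightarrow>
     cd_mult v (cd_real r) x = cd_scale r x \<and> cd_mult v x (cd_real r) = cd_scale r x"
proof (induction v arbitrary: x)
  case 0
  then show ?case by (auto simp: cd_carrier_def cd_real_def cd_scale_def fun_eq_iff)
next
  case (Suc v)
  have halves: "cd_pair (2^v) (cd_scale r (cd_lo (2^v) x)) (cd_scale r (cd_hi (2^v) x)) =
      cd_scale r x"
    using Suc.prems
    by (auto simp: cd_carrier_def cd_pair_def cd_lo_def cd_hi_def cd_scale_def fun_eq_iff)
  show ?case
    using Suc.IH[OF cd_carrier_lo] Suc.IH[OF cd_carrier_hi] halves
    by (simp add: Let_def cd_lo_real cd_hi_real cd_mult_zero cd_conj_zero cd_conj_real)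
       (auto simp: cd_sub_def cd_add_def cd_zero_def)
qed

lemmas cd_mult_real_left = cd_mult_real[THEN conjunct1]
lemmas cd_mult_real_right = cd_mult_real[THEN conjunct2]

lemma cd_Im_iff_conj: "z \<in> cd_Im v \<longleftrightarrow> z \<in> cd_carrier v \<and> cd_conj v z = cd_neg z"
  unfolding cd_Im_def cd_Re_def
  by (auto simp: fun_eq_iff cd_scale_def cd_add_def cd_zero_def cd_neg_def, (metis add_eq_0_iff)+)

lemma cd_Im_add: "x \<in> cd_Im v \<Longrightarrow> y \<in> cd_Im v \<Longrightarrow> cd_add x y \<in> cd_Im v"
  by (simp add: cd_Im_iff_conj cd_conj_add) (simp add: cd_neg_def cd_add_def fun_eq_iff)

lemma cd_Im_scale: "x \<in> cd_Im v \<Longrightarrow> cd_scale c x \<in> cd_Im v"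
  by (simp add: cd_Im_iff_conj cd_conj_scale) (simp add: cd_neg_def cd_scale_def fun_eq_iff)

lemma cd_anticomm_Im:
  assumes "x \<in> cd_Im v" and "y \<in> cd_Im v"
  shows "cd_anticomm v x y = cd_scale (-2) (cd_inner v x y)"
proof -
  have y: "y \<in> cd_carrier v" "cd_conj v y = cd_scale (-1) y"
    and x: "cd_conj v x = cd_scale (-1) x"
    using assms by (simp_all add: cd_Im_iff_conj cd_neg_eq_scale)
  have "cd_conj v (cd_mult v x (cd_conj v y)) = cd_mult v y (cd_conj v x)"
    by (simp only: cd_conj_mult cd_conj_conj[OF y(1)])
  then have "cd_inner v x y =
      cd_scale (1/2) (cd_add (cd_mult v x (cd_scale (-1) y)) (cd_mult v y (cd_scale (-1) x)))"
    by (simp add: cd_inner_def cd_Re_def x y)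
  then show ?thesis
    by (simp add: cd_anticomm_def cd_mult_scale_right)
       (simp add: cd_scale_def cd_add_def fun_eq_iff)
qed

lemma cd_anticomm_exp:
  assumes "x \<in> cd_carrier v" and "y \<in> cd_carrier v"
  shows "cd_anticomm v (cd_exp v x) (cd_exp v y) =
    cd_add (cd_scale (2 * cos (cd_norm v x)) (cd_exp v y))
      (cd_add (cd_scale (2 * sinc_div (cd_norm v x) * cos (cd_norm v y)) x)
        (cd_scale (sinc_div (cd_norm v x) * sinc_div (cd_norm v y)) (cd_anticomm v x y)))"
  unfolding cd_anticomm_def cd_exp_def
  by (simp add: cd_mult_bilinear cd_mult_real_left cd_mult_real_right assms)
     (simp add: fun_eq_iff cd_add_def cd_scale_def cd_real_def algebra_simps)

theorem lemma12:
  fixes v :: nat and M N N1 N2 :: cd and \<beta> :: real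
  assumes "v \<ge> 2"
    and "M \<in> cd_Im v" and "N \<in> cd_Im v"
    and "N = cd_add N1 N2"
    and "N1 = cd_scale \<beta> M"
    and "cd_inner v M N2 = cd_zero"
  shows "cd_anticomm v (cd_exp v M) (cd_exp v N) =
           cd_add (cd_scale (2 * cos (cd_norm v M)) (cd_exp v N))
                  (cd_scale (2 * sinc_div (cd_norm v M))
                     (cd_mult v M (cd_add (cd_real (cos (cd_norm v N)))
                                          (cd_scale (sinc_div (cd_norm v N)) N1))))"
proof -
  have M: "M \<in> cd_carrier v" and N: "N \<in> cd_carrier v"
    using assms(2,3) by (simp_all add: cd_Im_iff_conj)
  have "N2 = cd_add N (cd_scale (-\<beta>) M)"
    using assms(4,5) by (auto simp: fun_eq_iff cd_add_def cd_scale_def)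
  then have "N2 \<in> cd_Im v"
    using assms(2,3) by (simp add: cd_Im_add cd_Im_scale)
  then have "cd_anticomm v M N2 = cd_zero"
    using cd_anticomm_Im[OF assms(2)] assms(6) by (simp add: cd_scale_def cd_zero_def)
  then have "cd_anticomm v M N = cd_scale (2 * \<beta>) (cd_mult v M M)"
    unfolding assms(4,5) cd_anticomm_def
    by (simp add: cd_mult_bilinear) (simp add: fun_eq_iff cd_add_def cd_scale_def cd_zero_def)
  then show ?thesis
    unfolding cd_anticomm_exp[OF M N] assms(5)
    by (simp add: cd_mult_bilinear cd_mult_real_right M)
       (simp add: fun_eq_iff cd_add_def cd_scale_def cd_real_def cd_exp_def algebra_simps)
qed

end
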